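(* Let $\mathcal{H}$ be a hypertree whose basic sets are $B_1,\dots,B_m$, and let $T$ be a tree with vertex set $V(\mathcal{H})$. Then $T$ is a host tree of $\mathcal{H}$ if and only if $E(T)=\bigcup_{i=1}^m E_i$, where $E_i$ is $B_i$-admissible for each $1\le i\le m$.
   Context: A hypergraph $\mathcal{H}$ has a finite vertex set $V(\mathcal{H})$ and a finite family of nonempty subsets (edges). A host tree is a tree on $V(\mathcal{H})$ in which every edge induces a connected subgraph; a hypertree is a hypergraph with a host tree. For $V'\subseteq V(\mathcal{H})$, $I_\mathcal{H}(V')$ is the intersection of all edges containing $V'$, or $V(\mathcal{H})$ if none does. For $A\subseteq V(\mathcal{H})$, $\overline{\mathcal{H}_A}$ is the hypergraph on $V(\mathcal{H})$ whose edges are the edges of $\mathcal{H}$ not containing $A$. The 2-section of a hypergraph is the graph on its vertices where two distinct vertices are adjacent iff some edge contains both. A union of sets is connected if the intersection graph of the sets is connected. $Comp(\mathcal{H})$ is the hypergraph without repeated edges on $V(\mathcal{H})$ whose edges are $V(\mathcal{H})$, all singletons, and all proper subsets obtainable from edges of $\mathcal{H}$ by repeated nonempty intersections and connected unions; a basic set is an edge of $Comp(\mathcal{H})$ with more than one vertex that is not a connected union of strictly smaller edges of $Comp(\mathcal{H})$. For a basic set $B$: $A(B)$ is the set of connected components of the 2-section of $\overline{\mathcal{H}_B}$ that contain at least one vertex of $B$; $\Delta(B)$ is the set of pairs $uv$ with $u,v\in B$ lying in different connected components of the 2-section of $\overline{\mathcal{H}_B}$. A collection $E\subseteq\Delta(B)$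 is $B$-admissible if the graph $\Gamma_{B,E}$ with vertex set $A(B)$, having for each $e\in E$ an edge between the components of $A(B)$ containing the two endpoints of $e$, is a tree. *)

theory Defs
  imports Main
begin

definition reach :: "'a set set \<Rightarrow> 'a \<Rightarrow> 'a \<Rightarrow> bool" where
  "reach E u v \<longleftrightarrow> (u, v) \<in> {(x, y). {x, y} \<in> E}\<^sup>*"

definition connected_on :: "'a set \<Rightarrow> 'a set set \<Rightarrow> bool" where
  "connected_on S E \<longleftrightarrow> S \<noteq> {} \<and>
     (\<forall>u\<in>S. \<forall>v\<in>S. reach {e \<in> E. e \<subseteq> S} u v)"

definition graph_edges_on :: "'a set \<Rightarrow> 'a set set" where
  "graph_edges_on V = {{u, v} | u v. u \<in> V \<and> v \<in> V \<and> u \<noteq> v}"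

definition is_tree :: "'a set \<Rightarrow> 'a set set \<Rightarrow> bool" where
  "is_tree V T \<longleftrightarrow> T \<subseteq> graph_edges_on V \<and> connected_on V T \<and>
     (\<forall>e\<in>T. \<not> connected_on V (T - {e}))"

definition component :: "'a set \<Rightarrow> 'a set set \<Rightarrow> 'a \<Rightarrow> 'a set" where
  "component V E v = {w \<in> V. reach {e \<in> E. e \<subseteq> V} v w}"

definition hypergraph :: "'a set \<Rightarrow> 'a set set \<Rightarrow> bool" where
  "hypergraph V H \<longleftrightarrow> finite V \<and> (\<forall>e\<in>H. e \<noteq> {} \<and> e \<subseteq> V)"

definition host_tree :: "'a set \<Rightarrow> 'a set set \<Rightarrow> 'a set set \<Rightarrow> bool" where
  "host_tree V H T \<longleftrightarrow> is_tree V T \<and> (\<forall>e\<in>H. connected_on e T)"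

definition hypertree :: "'a set \<Rightarrow> 'a set set \<Rightarrow> bool" where
  "hypertree V H \<longleftrightarrow> hypergraph V H \<and> (\<exists>T. host_tree V H T)"

definition connected_family :: "'a set set \<Rightarrow> bool" where
  "connected_family F \<longleftrightarrow> F \<noteq> {} \<and>
     (\<forall>A\<in>F. \<forall>B\<in>F. (A, B) \<in> {(X, Y). X \<in> F \<and> Y \<in> F \<and> X \<inter> Y \<noteq> {}}\<^sup>*)"

inductive_set gen_sets :: "'a set set \<Rightarrow> 'a set set" for H where
  edge: "e \<in> H \<Longrightarrow> e \<in> gen_sets H"
| inter: "A \<in> gen_sets H \<Longrightarrow> B \<in> gen_sets H \<Longrightarrow> A \<inter> B \<noteq> {} \<Longrightarrow> A \<inter> B \<in> gen_sets H"
| union: "(\<forall>A\<in>F. A \<in> gen_sets H) \<Longrightarrow> connected_family F \<Longrightarrow> \<Union>F \<in> gen_sets H"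

definition Comp :: "'a set \<Rightarrow> 'a set set \<Rightarrow> 'a set set" where
  "Comp V H = {V} \<union> {{v} | v. v \<in> V} \<union> {S \<in> gen_sets H. S \<subset> V}"

definition basic_set :: "'a set \<Rightarrow> 'a set set \<Rightarrow> 'a set \<Rightarrow> bool" where
  "basic_set V H B \<longleftrightarrow> B \<in> Comp V H \<and> card B > 1 \<and>
     \<not> (\<exists>F \<subseteq> {C \<in> Comp V H. C \<subset> B}. connected_family F \<and> \<Union>F = B)"

definition Hbar :: "'a set set \<Rightarrow> 'a set \<Rightarrow> 'a set set" where
  "Hbar H A = {e \<in> H. \<not> A \<subseteq> e}"

definition two_section :: "'a set \<Rightarrow> 'a set set \<Rightarrow> 'a set set" where
  "two_section V H = {{u, v} | u v. u \<in> V \<and> v \<in> V \<and> u \<noteq> v \<and> (\<exists>e\<in>H. u \<in> e \<and> v \<in> e)}"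

definition A_comps :: "'a set \<Rightarrow> 'a set set \<Rightarrow> 'a set \<Rightarrow> 'a set set" where
  "A_comps V H B = {component V (two_section V (Hbar H B)) v | v. v \<in> B}"

definition Delta :: "'a set \<Rightarrow> 'a set set \<Rightarrow> 'a set \<Rightarrow> 'a set set" where
  "Delta V H B = {{u, v} | u v. u \<in> B \<and> v \<in> B \<and>
      component V (two_section V (Hbar H B)) u \<noteq> component V (two_section V (Hbar H B)) v}"

definition Gamma_edge :: "'a set \<Rightarrow> 'a set set \<Rightarrow> 'a set \<Rightarrow> 'a set \<Rightarrow> 'a set set" where
  "Gamma_edge V H B e = (\<lambda>v. component V (two_section V (Hbar H B)) v) ` e"

text \<open>Gamma_{B,E} is a multigraph (one edge per element of E); it is a tree iff
  distinct elements of E give distinct edges (no parallel edges) and the resulting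
  simple graph is a tree.\<close>
definition admissible :: "'a set \<Rightarrow> 'a set set \<Rightarrow> 'a set \<Rightarrow> 'a set set \<Rightarrow> bool" where
  "admissible V H B E \<longleftrightarrow> E \<subseteq> Delta V H B \<and>
     inj_on (Gamma_edge V H B) E \<and> is_tree (A_comps V H B) (Gamma_edge V H B ` E)"

end

(*
  If T is a host tree, every member of Comp(H) is a subtree of T, since subtrees of a tree are
  closed under nonempty intersections and connected unions. For a basic set B, the traces on B
  of the components of the 2-section of Hbar_B are then subtrees as well; contracting them turns
  the subtree T[B] into a tree on A(B) whose edges come from T \<inter> \<Delta>(B), so these sets are
  admissible. Every edge xy of T lies in \<Delta>(B) for a smallest member B of Comp(H) containing
  x and y, and such a B is basic.

  Conversely, given admissible sets E_B inside T, induction on |C| shows that every C in Comp(H)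
  is connected in T: a non-basic C is a connected union of smaller members, and for a basic B the
  traces are smaller members of Comp(H) which the tree \<Gamma>(B, E_B) links together through
  edges of T. That a basic set meets at least two components uses the existence of some host
  tree.
*)
theory Submission
  imports Defs "HOL-Library.Transitive_Closure_Table"
begin

section \<open>Reachability and connected sets\<close>

lemma reach_rtranclp: "reach E u v \<longleftrightarrow> (\<lambda>x y. {x, y} \<in> E)\<^sup>*\<^sup>* u v"
  unfolding reach_def by (simp add: rtranclp_rtrancl_eq)

lemma reach_refl [simp]: "reach E u u"
  by (simp add: reach_rtranclp)

lemma reach_edge: "{u, v} \<in> E \<Longrightarrow> reach E u v"
  unfolding reach_rtranclp by (rule r_into_rtranclp)

lemma reach_trans: "reach E u v \<Longrightarrow> reach E v w \<Longrightarrow> reach E u w"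
  unfolding reach_rtranclp by (rule rtranclp_trans)

lemma reach_sym: "reach E u v \<Longrightarrow> reach E v u"
  using symp_rtranclp[of "\<lambda>x y. {x, y} \<in> E"]
  unfolding reach_rtranclp by (auto simp: symp_def insert_commute)

lemma reach_induct [consumes 1, case_names base step]:
  assumes "reach E a b" "P a" "\<And>y z. reach E a y \<Longrightarrow> {y, z} \<in> E \<Longrightarrow> P y \<Longrightarrow> P z"
  shows "P b"
  using assms(1) unfolding reach_rtranclp
proof (induction rule: rtranclp_induct)
  case base
  then show ?case using assms(2) by simp
next
  case (step y z)
  then show ?case using assms(3) reach_rtranclp by metis
qed

lemma reach_hom:
  assumes "reach E u v" and "\<And>x y. {x, y} \<in> E \<Longrightarrow> reach E' (f x) (f y)"
  shows "reach E' (f u) (f v)"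
  using assms(1) by (induction rule: reach_induct) (auto intro: reach_trans assms(2))

lemma reach_mono:
  assumes "reach E u v" "E \<subseteq> E'"
  shows "reach E' u v"
  using reach_hom[where f = "\<lambda>x. x", OF assms(1)] assms(2) by (blast intro: reach_edge)

lemma reach_last_edge:
  assumes "reach E u v" "u \<noteq> v"
  obtains y where "reach E u y" "{y, v} \<in> E" "y \<noteq> v"
proof -
  have "v = u \<or> (\<exists>y. reach E u y \<and> {y, v} \<in> E \<and> y \<noteq> v)"
    using assms(1)
  proof (induction rule: reach_induct)
    case (step y z)
    then show ?case by (cases "y = z") auto
  qed simp
  then show ?thesis using assms(2) that by blast
qed

lemma reach_image_contract:
  assumes "reach G u v" and "\<And>x y. {x, y} \<in> G \<Longrightarrow> f x = f y \<or> {x, y} \<in> E"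
  shows "reach ((`) f ` E) (f u) (f v)"
proof (rule reach_hom[OF assms(1)])
  fix x y assume "{x, y} \<in> G"
  show "reach ((`) f ` E) (f x) (f y)"
  proof (cases "f x = f y")
    case False
    then have "{x, y} \<in> E" using assms(2) \<open>{x, y} \<in> G\<close> by blast
    then have "f ` {x, y} \<in> (`) f ` E" by (rule imageI)
    then show ?thesis by (simp add: reach_edge)
  qed simp
qed

lemma reach_lift:
  assumes "reach ((`) f ` E) (f u) (f v)" "u \<in> S" "v \<in> S"
    and edges: "\<And>e. e \<in> E \<Longrightarrow> \<exists>a b. e = {a, b} \<and> a \<in> S \<and> b \<in> S \<and> reach G a b"
    and fibres: "\<And>w w'. w \<in> S \<Longrightarrow> w' \<in> S \<Longrightarrow> f w = f w' \<Longrightarrow> reach G w w'"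
  shows "reach G u v"
proof -
  have "\<forall>w\<in>S. f w = Z \<longrightarrow> reach G u w" if "reach ((`) f ` E) (f u) Z" for Z
    using that
  proof (induction rule: reach_induct)
    case base
    show ?case using fibres[OF \<open>u \<in> S\<close>] by metis
  next
    case (step Y Z)
    obtain e where e: "e \<in> E" "{Y, Z} = f ` e" using step(2) by blast
    obtain a b where "e = {a, b}" and ab: "a \<in> S" "b \<in> S" "reach G a b"
      using edges[OF e(1)] by blast
    then have ab_image: "{Y, Z} = {f a, f b}" using e(2) by simp
    show ?case
    proof (intro ballI impI)
      fix w assume w: "w \<in> S" "f w = Z"
      from ab_image consider "f a = Y" "f b = Z" | "f a = Z" "f b = Y"
        by (auto simp: doubleton_eq_iff)
      then show "reach G u w"
      proof cases
        case 1
        then have "reach G u a" "reach G b w" using step(3) ab(1,2) fibres w by auto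
        then show ?thesis by (meson reach_trans ab(3))
      next
        case 2
        then have "reach G u b" "reach G a w" using step(3) ab(1,2) fibres w by auto
        then show ?thesis by (meson reach_trans reach_sym ab(3))
      qed
    qed
  qed
  then show ?thesis using assms(1,3) by blast
qed

lemma connected_on_singleton: "connected_on {v} E"
  unfolding connected_on_def by simp

lemma connected_on_reach:
  assumes "connected_on S E" "u \<in> S" "v \<in> S" "{e \<in> E. e \<subseteq> S} \<subseteq> E'"
  shows "reach E' u v"
proof -
  have "reach {e \<in> E. e \<subseteq> S} u v" using assms(1-3) unfolding connected_on_def by blast
  then show ?thesis using assms(4) by (rule reach_mono)
qed

lemma connected_on_iff_reach:
  assumes "\<And>e. e \<in> E \<Longrightarrow> e \<subseteq> S"
  shows "connected_on S E \<longleftrightarrow> S \<noteq> {} \<and> (\<forall>u\<in>S. \<forall>v\<in>S. reach E u v)"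
proof -
  have "{e \<in> E. e \<subseteq> S} = E" using assms by blast
  then show ?thesis unfolding connected_on_def by simp
qed

lemma connected_family_Union_trans:
  assumes "connected_family F" "\<And>A u v. A \<in> F \<Longrightarrow> u \<in> A \<Longrightarrow> v \<in> A \<Longrightarrow> R u v"
    and "\<And>x y z. R x y \<Longrightarrow> R y z \<Longrightarrow> R x z"
    and "u \<in> \<Union>F" "v \<in> \<Union>F"
  shows "R u v"
proof -
  obtain A B where AB: "A \<in> F" "B \<in> F" "u \<in> A" "v \<in> B" using assms(4,5) by auto
  have "(A, B) \<in> {(X, Y). X \<in> F \<and> Y \<in> F \<and> X \<inter> Y \<noteq> {}}\<^sup>*"
    using assms(1) AB unfolding connected_family_def by blast
  then have "\<forall>w\<in>B. R u w"
  proof (induction rule: rtrancl_induct)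
    case base
    then show ?case using assms(2) AB by blast
  next
    case (step Y Z)
    then show ?case using assms(2,3) by blast
  qed
  then show "R u v" using AB by blast
qed

lemma connected_on_Union:
  assumes "connected_family F" "\<And>A. A \<in> F \<Longrightarrow> connected_on A E"
  shows "connected_on (\<Union>F) E"
  unfolding connected_on_def
proof (intro conjI ballI)
  show "\<Union>F \<noteq> {}"
    using assms unfolding connected_family_def connected_on_def by blast
  fix u v assume "u \<in> \<Union>F" "v \<in> \<Union>F"
  show "reach {e \<in> E. e \<subseteq> \<Union>F} u v"
  proof (rule connected_family_Union_trans[OF assms(1) _ reach_trans \<open>u \<in> \<Union>F\<close> \<open>v \<in> \<Union>F\<close>])
    fix A x y assume "A \<in> F" "x \<in> A" "y \<in> A"
    then show "reach {e \<in> E. e \<subseteq> \<Union>F} x y"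
      by (intro connected_on_reach[OF assms(2)]) auto
  qed
qed

lemma connected_on_incident_edge:
  assumes "connected_on S G" "w \<in> S" "x \<in> S" "w \<noteq> x"
  obtains y where "{y, x} \<in> G" "y \<in> S" "y \<noteq> x"
proof -
  have "reach {e \<in> G. e \<subseteq> S} w x" using assms(1-3) unfolding connected_on_def by blast
  then obtain y where "{y, x} \<in> {e \<in> G. e \<subseteq> S}" "y \<noteq> x"
    using reach_last_edge assms(4) by metis
  then show ?thesis using that by blast
qed

lemma connected_family_of_edge_cover:
  assumes conn: "connected_on S G"
    and nontrivial: "u \<in> S" "v \<in> S" "u \<noteq> v"
    and members: "\<And>X. X \<in> F \<Longrightarrow> X \<noteq> {} \<and> X \<subseteq> S"
    and cover: "\<And>x y. {x, y} \<in> G \<Longrightarrow> x \<in> S \<Longrightarrow> y \<in> S \<Longrightarrow> x \<noteq> y \<Longrightarrow> \<exists>X\<in>F. x \<in> X \<and> y \<in> X"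
  shows "connected_family F \<and> \<Union>F = S"
proof -
  let ?G = "{e \<in> G. e \<subseteq> S}"
  let ?R = "{(X, Y). X \<in> F \<and> Y \<in> F \<and> X \<inter> Y \<noteq> {}}"
  have covered: "\<exists>X\<in>F. x \<in> X" if x: "x \<in> S" for x
  proof -
    obtain w where "w \<in> S" "w \<noteq> x" using nontrivial by blast
    then obtain y where "{y, x} \<in> G" "y \<in> S" "y \<noteq> x"
      by (rule connected_on_incident_edge[OF conn _ x])
    then show ?thesis using cover[of y x] x by auto
  qed
  have linked: "\<forall>Y\<in>F. z \<in> Y \<longrightarrow> (X, Y) \<in> ?R\<^sup>*" if "X \<in> F" "x \<in> X" "reach ?G x z" for X x z
    using that(3)
  proof (induction rule: reach_induct)
    case base
    then show ?case using that(1,2) by blast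
  next
    case (step y z)
    show ?case
    proof (cases "y = z")
      case True
      then show ?thesis using step(3) by simp
    next
      case False
      then obtain Z where "Z \<in> F" "y \<in> Z" "z \<in> Z" using cover[of y z] step(2) by auto
      then show ?thesis using step(3) by (blast intro: rtrancl_into_rtrancl)
    qed
  qed
  have "connected_family F"
    unfolding connected_family_def
  proof (intro conjI ballI)
    show "F \<noteq> {}" using covered nontrivial by blast
    fix X Y assume "X \<in> F" "Y \<in> F"
    then obtain x y where "x \<in> X" "y \<in> Y" "x \<in> S" "y \<in> S" using members by blast
    then show "(X, Y) \<in> ?R\<^sup>*"
      using linked[OF \<open>X \<in> F\<close> \<open>x \<in> X\<close>] conn \<open>Y \<in> F\<close> unfolding connected_on_def by blast
  qed
  moreover have "\<Union>F = S" using covered members by blast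
  ultimately show ?thesis ..
qed

lemma mem_component_self: "u \<in> V \<Longrightarrow> u \<in> component V E u"
  unfolding component_def by simp

lemma component_eq_if_mem:
  assumes "w \<in> component V E u"
  shows "component V E w = component V E u"
proof -
  have uw: "reach {e \<in> E. e \<subseteq> V} u w" using assms unfolding component_def by blast
  show ?thesis
    unfolding component_def using reach_trans[OF uw] reach_trans[OF reach_sym[OF uw]] by auto
qed

lemma component_eq_iff:
  assumes "u \<in> V" "w \<in> V"
  shows "component V E u = component V E w \<longleftrightarrow> reach {e \<in> E. e \<subseteq> V} u w"
proof
  assume "component V E u = component V E w"
  then have "w \<in> component V E u" using mem_component_self[OF assms(2)] by simp
  then show "reach {e \<in> E. e \<subseteq> V} u w" unfolding component_def by simp
next
  assume "reach {e \<in> E. e \<subseteq> V} u w"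
  then have "w \<in> component V E u" using assms(2) unfolding component_def by simp
  then show "component V E u = component V E w" by (rule component_eq_if_mem[symmetric])
qed

lemma connected_on_component:
  assumes "u \<in> V"
  shows "connected_on (component V E u) E"
proof -
  let ?C = "component V E u"
  have from_u: "reach {e \<in> E. e \<subseteq> ?C} u w" if "w \<in> ?C" for w
  proof -
    have "reach {e \<in> E. e \<subseteq> V} u w" using that unfolding component_def by blast
    then show ?thesis
    proof (induction rule: reach_induct)
      case (step y z)
      have "reach {e \<in> E. e \<subseteq> V} u z" by (rule reach_trans[OF step(1) reach_edge[OF step(2)]])
      then have "{y, z} \<subseteq> ?C" using step(1,2) unfolding component_def by simp
      then have "{y, z} \<in> {e \<in> E. e \<subseteq> ?C}" using step(2) by simp
      then show ?case by (rule reach_trans[OF step(3) reach_edge])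
    qed simp
  qed
  show ?thesis
    unfolding connected_on_def
  proof (intro conjI ballI)
    show "?C \<noteq> {}" using mem_component_self[OF assms] by blast
    fix a b assume "a \<in> ?C" "b \<in> ?C"
    show "reach {e \<in> E. e \<subseteq> ?C} a b"
      by (rule reach_trans[OF reach_sym[OF from_u[OF \<open>a \<in> ?C\<close>]] from_u[OF \<open>b \<in> ?C\<close>]])
  qed
qed

lemma two_section_edgeD:
  "{u, v} \<in> two_section V K \<Longrightarrow> u \<in> V \<and> v \<in> V \<and> u \<noteq> v \<and> (\<exists>e\<in>K. u \<in> e \<and> v \<in> e)"
  unfolding two_section_def by (auto simp: doubleton_eq_iff)

lemma two_section_restrict [simp]: "{e \<in> two_section V K. e \<subseteq> V} = two_section V K"
  unfolding two_section_def by blast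

lemma reach_two_section_member:
  assumes "e \<in> K" "e \<subseteq> V" "a \<in> e" "b \<in> e"
  shows "reach (two_section V K) a b"
proof (cases "a = b")
  case False
  then have "{a, b} \<in> two_section V K" using assms unfolding two_section_def by blast
  then show ?thesis by (rule reach_edge)
qed simp

lemma member_subset_component:
  assumes "e \<in> K" "e \<subseteq> V" "w \<in> e" "w \<in> component V (two_section V K) u"
  shows "e \<subseteq> component V (two_section V K) u"
proof
  fix x assume "x \<in> e"
  then have "reach (two_section V K) w x" by (rule reach_two_section_member[OF assms(1-3)])
  moreover have "reach (two_section V K) u w" using assms(4) unfolding component_def by simp
  ultimately show "x \<in> component V (two_section V K) u"
    using \<open>x \<in> e\<close> assms(2) reach_trans unfolding component_def by fastforce
qed

lemma component_Union_members:
  fixes V :: "'a set" and K :: "'a set set" and u :: 'a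
  defines "C \<equiv> component V (two_section V K) u"
  assumes "\<forall>e\<in>K. e \<noteq> {} \<and> e \<subseteq> V" "u \<in> V" "C \<noteq> {u}"
  shows "connected_family {e \<in> K. e \<subseteq> C} \<and> \<Union>{e \<in> K. e \<subseteq> C} = C"
proof -
  have "u \<in> C" unfolding C_def by (rule mem_component_self[OF assms(3)])
  then obtain v where "v \<in> C" "u \<noteq> v" using assms(4) by blast
  show ?thesis
  proof (rule connected_family_of_edge_cover[OF _ \<open>u \<in> C\<close> \<open>v \<in> C\<close> \<open>u \<noteq> v\<close>])
    show "connected_on C (two_section V K)"
      unfolding C_def by (rule connected_on_component[OF assms(3)])
    show "X \<noteq> {} \<and> X \<subseteq> C" if "X \<in> {e \<in> K. e \<subseteq> C}" for X
      using that assms(2) by blast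
    fix x y assume "{x, y} \<in> two_section V K" "x \<in> C"
    then obtain e where "e \<in> K" "x \<in> e" "y \<in> e" using two_section_edgeD[of x y V K] by blast
    moreover have "e \<subseteq> C"
      unfolding C_def
      by (rule member_subset_component[OF \<open>e \<in> K\<close> _ \<open>x \<in> e\<close>])
        (use \<open>x \<in> C\<close> \<open>e \<in> K\<close> assms(2) in \<open>auto simp: C_def\<close>)
    ultimately show "\<exists>X\<in>{e \<in> K. e \<subseteq> C}. x \<in> X \<and> y \<in> X" by blast
  qed
qed

lemma component_connected:
  assumes "\<forall>e\<in>K. e \<noteq> {} \<and> e \<subseteq> V" "\<And>e. e \<in> K \<Longrightarrow> connected_on e T" "u \<in> V"
  shows "connected_on (component V (two_section V K) u) T"
proof (cases "component V (two_section V K) u = {u}")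
  case False
  let ?F = "{e \<in> K. e \<subseteq> component V (two_section V K) u}"
  have "connected_family ?F" "\<Union>?F = component V (two_section V K) u"
    using component_Union_members[OF assms(1,3) False] by auto
  moreover have "connected_on (\<Union>?F) T"
    by (rule connected_on_Union[OF \<open>connected_family ?F\<close>]) (simp add: assms(2))
  ultimately show ?thesis by simp
qed (simp add: connected_on_singleton)

section \<open>Subtrees of a tree\<close>

lemma is_tree_edgeE:
  assumes "is_tree V T" "e \<in> T"
  obtains u v where "e = {u, v}" "u \<in> V" "v \<in> V" "u \<noteq> v"
  using assms unfolding is_tree_def graph_edges_on_def by blast

lemma is_tree_edge_subset: "is_tree V T \<Longrightarrow> e \<in> T \<Longrightarrow> e \<subseteq> V"
  by (metis is_tree_edgeE empty_subsetI insert_subset)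

lemma is_tree_nonempty: "is_tree V T \<Longrightarrow> V \<noteq> {}"
  unfolding is_tree_def connected_on_def by blast

lemma is_tree_reach: "is_tree V T \<Longrightarrow> u \<in> V \<Longrightarrow> v \<in> V \<Longrightarrow> reach T u v"
  using connected_on_iff_reach[of T V] is_tree_edge_subset unfolding is_tree_def by blast

lemma is_tree_edge_cut:
  assumes "is_tree V T" "{a, b} \<in> T"
  shows "\<not> reach (T - {{a, b}}) a b"
proof
  assume ab: "reach (T - {{a, b}}) a b"
  have "reach (T - {{a, b}}) x y" if "{x, y} \<in> T" for x y
  proof (cases "{x, y} = {a, b}")
    case True
    then show ?thesis using ab reach_sym[OF ab] by (auto simp: doubleton_eq_iff)
  next
    case False
    then show ?thesis using that by (auto intro: reach_edge)
  qed
  then have "reach (T - {{a, b}}) u v" if "u \<in> V" "v \<in> V" for u v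
    using reach_hom[where f = "\<lambda>x. x", OF is_tree_reach[OF assms(1) that]] by blast
  then have "connected_on V (T - {{a, b}})"
    using connected_on_iff_reach[of "T - {{a, b}}" V] is_tree_edge_subset[OF assms(1)]
      is_tree_nonempty[OF assms(1)] by blast
  then show False using assms unfolding is_tree_def by blast
qed

lemma rtrancl_path_reach_Diff:
  assumes "rtrancl_path (\<lambda>x y. {x, y} \<in> T) x ys z" "a \<notin> set (x # ys)" "a \<in> e"
  shows "reach (T - {e}) x z"
  using assms
proof (induction rule: rtrancl_path.induct)
  case (step x y ys z)
  then have "{x, y} \<in> T - {e}" by auto
  moreover have "reach (T - {e}) y z" using step by simp
  ultimately show ?case by (rule reach_trans[OF reach_edge])
qed simp

text \<open>Walk along a simple path from a to v: if its first edge left S, the rest of the path and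
  a detour through S would join the ends of that edge without using it.\<close>
lemma rtrancl_path_reach_within:
  assumes "is_tree V T"
    and no_cut: "\<And>e a b. e \<in> T \<Longrightarrow> \<not> e \<subseteq> S \<Longrightarrow> a \<in> S \<Longrightarrow> b \<in> S \<Longrightarrow> reach (T - {e}) a b"
    and "rtrancl_path (\<lambda>x y. {x, y} \<in> T) a xs v" "distinct (a # xs)" "a \<in> S" "v \<in> S"
  shows "reach {e \<in> T. e \<subseteq> S} a v"
  using assms(3-)
proof (induction rule: rtrancl_path.induct)
  case (step a b ys v)
  show ?case
  proof (cases "b \<in> S")
    case True
    then have "{a, b} \<in> {e \<in> T. e \<subseteq> S}" using step.hyps(1) step.prems(2) by simp
    moreover have "reach {e \<in> T. e \<subseteq> S} b v" using step True by simp
    ultimately show ?thesis by (rule reach_trans[OF reach_edge])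
  next
    case False
    have "reach (T - {{a, b}}) b v"
      using rtrancl_path_reach_Diff[OF step.hyps(2), of a "{a, b}"] step.prems(1) by simp
    moreover have "reach (T - {{a, b}}) v a"
      using no_cut step.hyps(1) step.prems(2,3) False by blast
    ultimately have "reach (T - {{a, b}}) a b" by (meson reach_sym reach_trans)
    then show ?thesis using is_tree_edge_cut[OF assms(1) step.hyps(1)] by blast
  qed
qed simp

lemma connected_on_if_no_cut_edge:
  assumes "is_tree V T" "S \<subseteq> V" "S \<noteq> {}"
    and "\<And>e a b. e \<in> T \<Longrightarrow> \<not> e \<subseteq> S \<Longrightarrow> a \<in> S \<Longrightarrow> b \<in> S \<Longrightarrow> reach (T - {e}) a b"
  shows "connected_on S T"
  unfolding connected_on_def
proof (intro conjI ballI)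
  show "S \<noteq> {}" by fact
  fix u v assume uv: "u \<in> S" "v \<in> S"
  then have "reach T u v" using is_tree_reach[OF assms(1)] assms(2) by blast
  then obtain xs where "rtrancl_path (\<lambda>x y. {x, y} \<in> T) u xs v"
    unfolding reach_rtranclp by (auto simp: rtranclp_eq_rtrancl_path)
  then obtain xs' where "rtrancl_path (\<lambda>x y. {x, y} \<in> T) u xs' v" "distinct (u # xs')"
    by (rule rtrancl_path_distinct)
  then show "reach {e \<in> T. e \<subseteq> S} u v"
    using rtrancl_path_reach_within[OF assms(1,4)] uv by blast
qed

lemma connected_on_Int:
  assumes "is_tree V T" "A \<subseteq> V" "connected_on A T" "connected_on B T" "A \<inter> B \<noteq> {}"
  shows "connected_on (A \<inter> B) T"
proof (rule connected_on_if_no_cut_edge[OF assms(1)])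
  fix e a b assume "e \<in> T" "\<not> e \<subseteq> A \<inter> B" "a \<in> A \<inter> B" "b \<in> A \<inter> B"
  then consider "\<not> e \<subseteq> A" | "\<not> e \<subseteq> B" by blast
  then show "reach (T - {e}) a b"
  proof cases
    case 1
    show ?thesis by (rule connected_on_reach[OF assms(3)]) (use 1 \<open>a \<in> A \<inter> B\<close> \<open>b \<in> A \<inter> B\<close> in auto)
  next
    case 2
    show ?thesis by (rule connected_on_reach[OF assms(4)]) (use 2 \<open>a \<in> A \<inter> B\<close> \<open>b \<in> A \<inter> B\<close> in auto)
  qed
qed (use assms(2,5) in auto)

lemma tree_edge_covered_if_reach_two_section:
  assumes "is_tree V T" "{x, y} \<in> T" "\<And>e. e \<in> K \<Longrightarrow> connected_on e T"
    and "reach (two_section V K) x y"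
  shows "\<exists>e\<in>K. x \<in> e \<and> y \<in> e"
proof (rule ccontr)
  assume none: "\<not> ?thesis"
  have "reach (T - {{x, y}}) u w" if uw: "{u, w} \<in> two_section V K" for u w
  proof -
    obtain e where e: "e \<in> K" "u \<in> e" "w \<in> e" using two_section_edgeD[OF uw] by blast
    have "{f \<in> T. f \<subseteq> e} \<subseteq> T - {{x, y}}" using none e(1) by auto
    then show ?thesis by (rule connected_on_reach[OF assms(3)[OF e(1)] e(2,3)])
  qed
  then have "reach (T - {{x, y}}) x y" using reach_hom[where f = "\<lambda>x. x", OF assms(4)] by blast
  then show False using is_tree_edge_cut[OF assms(1,2)] by blast
qed

lemma tree_edge_covered_if_connected_family:
  assumes "is_tree V T" "{x, y} \<in> T" "connected_family F" "\<And>A. A \<in> F \<Longrightarrow> connected_on A T"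
    and "x \<in> \<Union>F" "y \<in> \<Union>F"
  shows "\<exists>A\<in>F. x \<in> A \<and> y \<in> A"
proof (rule ccontr)
  assume none: "\<not> ?thesis"
  have "reach (T - {{x, y}}) x y"
  proof (rule connected_family_Union_trans[where R = "reach (T - {{x, y}})", OF assms(3) _ reach_trans assms(5,6)])
    fix A u v assume A: "A \<in> F" "u \<in> A" "v \<in> A"
    have "{f \<in> T. f \<subseteq> A} \<subseteq> T - {{x, y}}" using none A by auto
    then show "reach (T - {{x, y}}) u v" by (rule connected_on_reach[OF assms(4)[OF A(1)] A(2,3)])
  qed
  then show False using is_tree_edge_cut[OF assms(1,2)] by blast
qed

section \<open>The closure Comp(H)\<close>

lemma gen_sets_subset:
  assumes "hypergraph V H" "S \<in> gen_sets H"
  shows "S \<noteq> {} \<and> S \<subseteq> V"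
  using assms(2)
proof induction
  case (union F)
  then have "F \<noteq> {}" unfolding connected_family_def by simp
  then show ?case using union.IH by blast
qed (use assms(1) in \<open>auto simp: hypergraph_def\<close>)

lemma gen_sets_connected:
  assumes "hypergraph V H" "host_tree V H T" "S \<in> gen_sets H"
  shows "connected_on S T"
  using assms(3)
proof induction
  case (edge e)
  then show ?case using assms(2) unfolding host_tree_def by blast
next
  case (inter A B)
  have "is_tree V T" using assms(2) unfolding host_tree_def by blast
  moreover have "A \<subseteq> V" using gen_sets_subset[OF assms(1) inter.hyps(1)] by blast
  ultimately show ?case using connected_on_Int inter.IH inter.hyps(3) by blast
next
  case (union F)
  then show ?case using connected_on_Union[of F T] by blast
qed

lemma Comp_subset: "hypergraph V H \<Longrightarrow> C \<in> Comp V H \<Longrightarrow> C \<subseteq> V"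
  unfolding Comp_def by auto

lemma Comp_finite:
  assumes "hypergraph V H" "C \<in> Comp V H"
  shows "finite C"
  using finite_subset[OF Comp_subset[OF assms]] assms(1) unfolding hypergraph_def by blast

lemma Comp_nonempty: "hypergraph V H \<Longrightarrow> V \<noteq> {} \<Longrightarrow> C \<in> Comp V H \<Longrightarrow> C \<noteq> {}"
  using gen_sets_subset unfolding Comp_def by auto

lemma gen_sets_in_Comp: "hypergraph V H \<Longrightarrow> S \<in> gen_sets H \<Longrightarrow> S \<in> Comp V H"
  using gen_sets_subset[of V H S] unfolding Comp_def by blast

lemma edge_in_Comp: "hypergraph V H \<Longrightarrow> e \<in> H \<Longrightarrow> e \<in> Comp V H"
  by (rule gen_sets_in_Comp) (auto intro: gen_sets.edge)

lemma Comp_Int: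
  assumes "hypergraph V H" "C \<in> Comp V H" "D \<in> Comp V H" "C \<inter> D \<noteq> {}"
  shows "C \<inter> D \<in> Comp V H"
proof -
  have "C \<subseteq> V" "D \<subseteq> V" using Comp_subset assms(1-3) by blast+
  then consider "C \<inter> D = C" | "C \<inter> D = D" | "C \<in> gen_sets H" "D \<in> gen_sets H"
    using assms(2-4) unfolding Comp_def by blast
  then show ?thesis
  proof cases
    case 3
    then have "C \<inter> D \<in> gen_sets H" using assms(4) by (rule gen_sets.inter)
    then show ?thesis by (rule gen_sets_in_Comp[OF assms(1)])
  qed (use assms(2,3) in simp_all)
qed

lemma Comp_connected:
  assumes "hypergraph V H" "host_tree V H T" "C \<in> Comp V H"
  shows "connected_on C T"
  using assms gen_sets_connected[OF assms(1,2)] connected_on_singleton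
  unfolding Comp_def host_tree_def is_tree_def by auto

lemma Hbar_subset: "Hbar H B \<subseteq> H"
  unfolding Hbar_def by blast

lemma Hbar_edges: "hypergraph V H \<Longrightarrow> \<forall>e\<in>Hbar H B. e \<noteq> {} \<and> e \<subseteq> V"
  unfolding Hbar_def hypergraph_def by blast

lemma Hbar_connected: "host_tree V H T \<Longrightarrow> e \<in> Hbar H B \<Longrightarrow> connected_on e T"
  unfolding Hbar_def host_tree_def by blast

abbreviation bar_component :: "'a set \<Rightarrow> 'a set set \<Rightarrow> 'a set \<Rightarrow> 'a \<Rightarrow> 'a set" where
  "bar_component V H B \<equiv> component V (two_section V (Hbar H B))"

lemma bar_component_in_gen_sets:
  assumes "hypergraph V H" "u \<in> V" "bar_component V H B u \<noteq> {u}"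
  shows "bar_component V H B u \<in> gen_sets H"
proof -
  let ?F = "{e \<in> Hbar H B. e \<subseteq> bar_component V H B u}"
  have "connected_family ?F" "\<Union>?F = bar_component V H B u"
    using component_Union_members[OF Hbar_edges[OF assms(1)] assms(2,3)] by auto
  moreover have "\<forall>A\<in>?F. A \<in> gen_sets H" using Hbar_subset by (blast intro: gen_sets.edge)
  ultimately show ?thesis using gen_sets.union[of ?F H] by simp
qed

lemma bar_component_Int_in_Comp:
  assumes "hypergraph V H" "B \<in> Comp V H" "u \<in> B" "\<not> B \<subseteq> bar_component V H B u"
  shows "bar_component V H B u \<inter> B \<in> Comp V H"
proof -
  have "u \<in> V" using Comp_subset[OF assms(1,2)] assms(3) by blast
  show ?thesis
  proof (cases "bar_component V H B u = {u}")
    case True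
    then have "bar_component V H B u \<inter> B = {u}" using assms(3) by blast
    then show ?thesis using \<open>u \<in> V\<close> unfolding Comp_def by blast
  next
    case False
    then have "bar_component V H B u \<in> Comp V H"
      using gen_sets_in_Comp[OF assms(1) bar_component_in_gen_sets[OF assms(1) \<open>u \<in> V\<close>]] by blast
    moreover have "u \<in> bar_component V H B u \<inter> B"
      using mem_component_self[OF \<open>u \<in> V\<close>] assms(3) by simp
    ultimately show ?thesis using Comp_Int[OF assms(1) _ assms(2)] by (metis empty_iff)
  qed
qed

lemma Delta_pair_iff:
  "{u, v} \<in> Delta V H B \<longleftrightarrow>
    u \<in> B \<and> v \<in> B \<and> bar_component V H B u \<noteq> bar_component V H B v"
  unfolding Delta_def by (auto simp: doubleton_eq_iff)

lemma DeltaE: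
  assumes "e \<in> Delta V H B"
  obtains u v where "e = {u, v}" "u \<in> B" "v \<in> B"
    "bar_component V H B u \<noteq> bar_component V H B v"
  using assms unfolding Delta_def by blast

lemma Gamma_edgeE:
  assumes "g \<in> (`) (bar_component V H B) ` E" "E \<subseteq> Delta V H B"
  obtains u v where "{u, v} \<in> E" "g = {bar_component V H B u, bar_component V H B v}"
    "u \<in> B" "v \<in> B" "bar_component V H B u \<noteq> bar_component V H B v"
proof -
  obtain e where e: "e \<in> E" "g = bar_component V H B ` e" using assms(1) by blast
  then obtain u v where "e = {u, v}" "u \<in> B" "v \<in> B"
    "bar_component V H B u \<noteq> bar_component V H B v"
    using assms(2) by (blast elim: DeltaE)
  then show ?thesis using that e by simp
qed

lemma Gamma_edge_eq: "Gamma_edge V H B = (`) (bar_component V H B)"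
  unfolding Gamma_edge_def by (rule ext) simp

lemma mem_A_comps: "u \<in> B \<Longrightarrow> bar_component V H B u \<in> A_comps V H B"
  unfolding A_comps_def by blast

lemma two_elements_if_card_gt_1: "1 < card A \<Longrightarrow> \<exists>u\<in>A. \<exists>v\<in>A. u \<noteq> v"
  using card_le_Suc0_iff_eq[of A] card.infinite[of A] by force

text \<open>Here the existence of some host tree T0 is needed: if B lay in one component, every edge of
  T0 inside B would lie in an edge of \<open>Hbar H B\<close>, and the traces of these edges on B would
  form a connected cover of B by smaller members of Comp(H).\<close>
lemma basic_set_not_within_bar_component:
  assumes "hypertree V H" "basic_set V H B" "w \<in> B"
  shows "\<not> B \<subseteq> bar_component V H B w"
proof
  assume within: "B \<subseteq> bar_component V H B w"
  have hg: "hypergraph V H" using assms(1) unfolding hypertree_def by blast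
  obtain T0 where host: "host_tree V H T0" using assms(1) unfolding hypertree_def by blast
  have B: "B \<in> Comp V H" "1 < card B" using assms(2) unfolding basic_set_def by auto
  then obtain u v where "u \<in> B" "v \<in> B" "u \<noteq> v" using two_elements_if_card_gt_1 by blast
  let ?F = "{e \<inter> B | e. e \<in> Hbar H B \<and> e \<inter> B \<noteq> {}}"
  have "?F \<subseteq> {C \<in> Comp V H. C \<subset> B}"
  proof
    fix X assume "X \<in> ?F"
    then obtain e where e: "X = e \<inter> B" "e \<in> H" "\<not> B \<subseteq> e" "e \<inter> B \<noteq> {}"
      unfolding Hbar_def by blast
    then have "X \<in> Comp V H"
      using Comp_Int[OF hg edge_in_Comp[OF hg e(2)] B(1)] by simp
    then show "X \<in> {C \<in> Comp V H. C \<subset> B}" using e(1,3) by blast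
  qed
  moreover have "connected_family ?F \<and> \<Union>?F = B"
  proof (rule connected_family_of_edge_cover[OF _ \<open>u \<in> B\<close> \<open>v \<in> B\<close> \<open>u \<noteq> v\<close>])
    show "connected_on B T0" by (rule Comp_connected[OF hg host B(1)])
    show "X \<noteq> {} \<and> X \<subseteq> B" if "X \<in> ?F" for X using that by blast
    fix x y assume xy: "{x, y} \<in> T0" "x \<in> B" "y \<in> B"
    have "x \<in> V" "y \<in> V" using xy(2,3) Comp_subset[OF hg B(1)] by blast+
    have tree: "is_tree V T0" using host unfolding host_tree_def by blast
    have "reach (two_section V (Hbar H B)) x y"
      using within xy(2,3) \<open>x \<in> V\<close> \<open>y \<in> V\<close> component_eq_if_mem component_eq_iff
      by (metis subsetD two_section_restrict)
    then have "\<exists>e\<in>Hbar H B. x \<in> e \<and> y \<in> e"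
      using tree_edge_covered_if_reach_two_section[OF tree xy(1), of "Hbar H B"] Hbar_connected[OF host]
      by blast
    then show "\<exists>X\<in>?F. x \<in> X \<and> y \<in> X" using xy(2,3) by blast
  qed
  ultimately show False using assms(2) unfolding basic_set_def by blast
qed

section \<open>Host trees decompose into admissible sets\<close>

lemma connected_on_trace:
  assumes "hypergraph V H" "host_tree V H T" "B \<in> Comp V H" "w \<in> B"
  shows "connected_on (bar_component V H B w \<inter> B) T"
proof (rule connected_on_Int)
  have "w \<in> V" using Comp_subset[OF assms(1,3)] assms(4) by blast
  show "is_tree V T" using assms(2) unfolding host_tree_def by blast
  show "bar_component V H B w \<subseteq> V" unfolding component_def by blast
  show "connected_on (bar_component V H B w) T"
    by (rule component_connected[OF Hbar_edges[OF assms(1)] Hbar_connected[OF assms(2)] \<open>w \<in> V\<close>])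
  show "connected_on B T" by (rule Comp_connected[OF assms(1-3)])
  show "bar_component V H B w \<inter> B \<noteq> {}"
    using mem_component_self[OF \<open>w \<in> V\<close>] assms(4) by blast
qed

text \<open>The traces of the components on B are subtrees of T, so an edge of T between two of them
  is the only connection between their images in the contracted graph.\<close>
lemma tree_edge_separates_contraction:
  assumes "hypergraph V H" "host_tree V H T" "B \<in> Comp V H" "{u, v} \<in> T \<inter> Delta V H B"
  shows "\<not> reach ((`) (bar_component V H B) ` (T \<inter> Delta V H B - {{u, v}}))
      (bar_component V H B u) (bar_component V H B v)"
proof
  let ?c = "bar_component V H B"
  assume contracted: "reach ((`) ?c ` (T \<inter> Delta V H B - {{u, v}})) (?c u) (?c v)"
  have uv: "u \<in> B" "v \<in> B" "?c u \<noteq> ?c v" using assms(4) by (simp_all add: Delta_pair_iff)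
  have "reach (T - {{u, v}}) u v"
  proof (rule reach_lift[OF contracted uv(1,2)])
    fix e assume e: "e \<in> T \<inter> Delta V H B - {{u, v}}"
    then obtain a b where ab: "e = {a, b}" "a \<in> B" "b \<in> B" by (blast elim: DeltaE)
    moreover have "reach (T - {{u, v}}) a b" using e ab(1) by (auto intro: reach_edge)
    ultimately show "\<exists>a b. e = {a, b} \<and> a \<in> B \<and> b \<in> B \<and> reach (T - {{u, v}}) a b" by blast
  next
    fix w w' assume w: "w \<in> B" "w' \<in> B" "?c w = ?c w'"
    have "\<not> {u, v} \<subseteq> ?c w"
    proof
      assume "{u, v} \<subseteq> ?c w"
      then have "?c u = ?c w" "?c v = ?c w" by (metis insert_subset component_eq_if_mem)+
      then show False using uv(3) by simp
    qed
    then have "{f \<in> T. f \<subseteq> ?c w \<inter> B} \<subseteq> T - {{u, v}}" by blast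
    moreover have "w \<in> ?c w \<inter> B" "w' \<in> ?c w \<inter> B"
      using mem_component_self Comp_subset[OF assms(1,3)] w by (metis IntI subsetD)+
    ultimately show "reach (T - {{u, v}}) w w'"
      using connected_on_reach[OF connected_on_trace[OF assms(1-3) w(1)]] by blast
  qed
  moreover have "is_tree V T" "{u, v} \<in> T" using assms(2,4) unfolding host_tree_def by auto
  then have "\<not> reach (T - {{u, v}}) u v" by (rule is_tree_edge_cut)
  ultimately show False by contradiction
qed

lemma Gamma_subset_graph_edges:
  assumes "E \<subseteq> Delta V H B"
  shows "(`) (bar_component V H B) ` E \<subseteq> graph_edges_on (A_comps V H B)"
proof
  fix g assume "g \<in> (`) (bar_component V H B) ` E"
  then obtain u v where "g = {bar_component V H B u, bar_component V H B v}" "u \<in> B" "v \<in> B"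
    "bar_component V H B u \<noteq> bar_component V H B v"
    using assms by (rule Gamma_edgeE) blast
  then show "g \<in> graph_edges_on (A_comps V H B)"
    using mem_A_comps[of u B V H] mem_A_comps[of v B V H] unfolding graph_edges_on_def by blast
qed

lemma connected_on_contraction:
  assumes "hypergraph V H" "host_tree V H T" "B \<in> Comp V H"
  shows "connected_on (A_comps V H B) ((`) (bar_component V H B) ` (T \<inter> Delta V H B))"
proof -
  let ?c = "bar_component V H B" and ?A = "A_comps V H B"
  let ?\<Gamma> = "(`) ?c ` (T \<inter> Delta V H B)"
  have reach_\<Gamma>: "reach ?\<Gamma> (?c u) (?c v)" if "u \<in> B" "v \<in> B" for u v
  proof (rule reach_image_contract[where G = "{e \<in> T. e \<subseteq> B}"])
    show "reach {e \<in> T. e \<subseteq> B} u v"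
      by (rule connected_on_reach[OF Comp_connected[OF assms] that]) simp
    fix x y assume "{x, y} \<in> {e \<in> T. e \<subseteq> B}"
    then show "?c x = ?c y \<or> {x, y} \<in> T \<inter> Delta V H B"
      by (cases "?c x = ?c y") (simp_all add: Delta_pair_iff)
  qed
  have "B \<noteq> {}"
    using Comp_nonempty[OF assms(1) _ assms(3)] is_tree_nonempty assms(2) unfolding host_tree_def by blast
  have "e \<subseteq> ?A" if "e \<in> ?\<Gamma>" for e
    using subsetD[OF Gamma_subset_graph_edges that] unfolding graph_edges_on_def by blast
  then have "{e \<in> ?\<Gamma>. e \<subseteq> ?A} = ?\<Gamma>" by (simp add: Collect_conj_eq Int_absorb2 subsetI)
  then show ?thesis
    unfolding connected_on_def
  proof (intro conjI ballI)
    obtain b where "b \<in> B" using \<open>B \<noteq> {}\<close> by blast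
    then show "?A \<noteq> {}" using mem_A_comps[of b B V H] by blast
    fix X Y assume "X \<in> ?A" "Y \<in> ?A"
    then obtain u v where "u \<in> B" "v \<in> B" "X = ?c u" "Y = ?c v" unfolding A_comps_def by blast
    then show "reach {e \<in> ?\<Gamma>. e \<subseteq> ?A} X Y" using reach_\<Gamma> \<open>{e \<in> ?\<Gamma>. e \<subseteq> ?A} = ?\<Gamma>\<close> by simp
  qed
qed

lemma admissible_Int_Delta:
  assumes "hypergraph V H" "host_tree V H T" "B \<in> Comp V H"
  shows "admissible V H B (T \<inter> Delta V H B)"
proof -
  let ?c = "bar_component V H B" and ?E = "T \<inter> Delta V H B" and ?A = "A_comps V H B"
  let ?\<Gamma> = "(`) ?c ` ?E"
  have cut: "\<not> reach ((`) ?c ` (?E - {{u, v}})) (?c u) (?c v)" if "{u, v} \<in> ?E" for u v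
    by (rule tree_edge_separates_contraction[OF assms that])
  have inj: "inj_on ((`) ?c) ?E"
  proof (rule inj_onI, rule ccontr)
    fix e e' assume e: "e \<in> ?E" "e' \<in> ?E" "?c ` e = ?c ` e'" "e \<noteq> e'"
    obtain u v where uv: "e = {u, v}" using e(1) by (blast elim: DeltaE)
    have "e' \<in> ?E - {{u, v}}" using e(2,4) uv by simp
    then have "?c ` e' \<in> (`) ?c ` (?E - {{u, v}})" by (rule imageI)
    moreover have "?c ` e' = {?c u, ?c v}" using e(3) uv by simp
    ultimately have "reach ((`) ?c ` (?E - {{u, v}})) (?c u) (?c v)" by (simp add: reach_edge)
    then show False using cut e(1) uv by blast
  qed
  have minimal: "\<not> connected_on ?A (?\<Gamma> - {g})" if "g \<in> ?\<Gamma>" for g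
  proof
    assume "connected_on ?A (?\<Gamma> - {g})"
    obtain u v where uv: "{u, v} \<in> ?E" "g = {?c u, ?c v}" "u \<in> B" "v \<in> B"
      using \<open>g \<in> ?\<Gamma>\<close> by (rule Gamma_edgeE) blast+
    have "reach (?\<Gamma> - {g}) (?c u) (?c v)"
      by (rule connected_on_reach[OF \<open>connected_on ?A (?\<Gamma> - {g})\<close> mem_A_comps mem_A_comps])
        (use uv in auto)
    moreover have "?\<Gamma> - {g} \<subseteq> (`) ?c ` (?E - {{u, v}})" using uv(2) by auto
    ultimately have "reach ((`) ?c ` (?E - {{u, v}})) (?c u) (?c v)" by (rule reach_mono)
    then show False using cut[OF uv(1)] by contradiction
  qed
  show ?thesis
    unfolding admissible_def is_tree_def Gamma_edge_eq
    using inj Gamma_subset_graph_edges connected_on_contraction[OF assms] minimal by blast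
qed

lemma basic_set_if_minimal:
  assumes "hypergraph V H" "host_tree V H T" "{x, y} \<in> T" "x \<noteq> y"
    and B: "B \<in> Comp V H" "x \<in> B" "y \<in> B"
    and minimal: "\<And>C. C \<in> Comp V H \<Longrightarrow> x \<in> C \<Longrightarrow> y \<in> C \<Longrightarrow> \<not> C \<subset> B"
  shows "basic_set V H B"
  unfolding basic_set_def
proof (intro conjI notI)
  show "B \<in> Comp V H" by fact
  have "card {x, y} \<le> card B" using Comp_finite[OF assms(1) B(1)] B(2,3) by (intro card_mono) auto
  then show "1 < card B" using assms(4) by simp
  assume "\<exists>F\<subseteq>{C \<in> Comp V H. C \<subset> B}. connected_family F \<and> \<Union>F = B"
  then obtain F where F: "F \<subseteq> {C \<in> Comp V H. C \<subset> B}" "connected_family F" "\<Union>F = B" by blast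
  have "is_tree V T" using assms(2) unfolding host_tree_def by blast
  moreover have "\<And>A. A \<in> F \<Longrightarrow> connected_on A T"
    using F(1) Comp_connected[OF assms(1,2)] by blast
  ultimately obtain A where "A \<in> F" "x \<in> A" "y \<in> A"
    using tree_edge_covered_if_connected_family[OF _ assms(3) F(2)] F(3) B(2,3) by blast
  then show False using minimal F(1) by blast
qed

text \<open>Take B smallest in Comp(H) containing both ends of the edge.\<close>
lemma tree_edge_in_Delta_basic_set:
  assumes "hypergraph V H" "host_tree V H T" "{x, y} \<in> T"
  shows "\<exists>B. basic_set V H B \<and> {x, y} \<in> Delta V H B"
proof -
  have tree: "is_tree V T" using assms(2) unfolding host_tree_def by blast
  have "x \<in> V" "y \<in> V" "x \<noteq> y"
    using is_tree_edgeE[OF tree assms(3)] by (metis doubleton_eq_iff)+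
  let ?P = "\<lambda>C. C \<in> Comp V H \<and> x \<in> C \<and> y \<in> C"
  have "?P V" using \<open>x \<in> V\<close> \<open>y \<in> V\<close> unfolding Comp_def by blast
  then obtain B where B: "?P B" and least: "\<And>C. ?P C \<Longrightarrow> card B \<le> card C"
    using ex_has_least_nat[of ?P V card] by blast
  have minimal: "\<not> C \<subset> B" if "?P C" for C
  proof
    assume "C \<subset> B"
    then have "card C < card B" by (rule psubset_card_mono[OF Comp_finite[OF assms(1) conjunct1[OF B]]])
    then show False using least[OF that] by simp
  qed
  have basic: "basic_set V H B" using basic_set_if_minimal[OF assms \<open>x \<noteq> y\<close>] B minimal by blast
  have "bar_component V H B x \<noteq> bar_component V H B y"
  proof
    assume "bar_component V H B x = bar_component V H B y"
    then have "reach (two_section V (Hbar H B)) x y"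
      using component_eq_iff \<open>x \<in> V\<close> \<open>y \<in> V\<close> by (metis two_section_restrict)
    then obtain e where e: "e \<in> Hbar H B" "x \<in> e" "y \<in> e"
      using tree_edge_covered_if_reach_two_section[OF tree assms(3), of "Hbar H B"]
        Hbar_connected[OF assms(2)] by blast
    then have "e \<in> H" "\<not> B \<subseteq> e" unfolding Hbar_def by auto
    then have "?P (B \<inter> e)" using Comp_Int[OF assms(1) _ edge_in_Comp[OF assms(1)]] B e(2,3) by blast
    moreover have "B \<inter> e \<subset> B" using \<open>\<not> B \<subseteq> e\<close> by blast
    ultimately show False using minimal by blast
  qed
  then have "{x, y} \<in> Delta V H B" using B by (simp add: Delta_pair_iff)
  with basic show ?thesis by blast
qed

lemma host_tree_eq_Union_Int_Delta:
  assumes "hypergraph V H" "host_tree V H T"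
  shows "T = (\<Union>B \<in> {B. basic_set V H B}. T \<inter> Delta V H B)"
proof -
  have "e \<in> (\<Union>B \<in> {B. basic_set V H B}. T \<inter> Delta V H B)" if "e \<in> T" for e
  proof -
    have "is_tree V T" using assms(2) unfolding host_tree_def by blast
    then obtain x y where "e = {x, y}" using is_tree_edgeE \<open>e \<in> T\<close> by metis
    then show ?thesis using tree_edge_in_Delta_basic_set[OF assms] \<open>e \<in> T\<close> by blast
  qed
  then show ?thesis by blast
qed

section \<open>Admissible sets yield host trees\<close>

lemma basic_set_connected_if_traces_connected:
  assumes "admissible V H B E" "E \<subseteq> T" "B \<subseteq> V" "B \<noteq> {}"
    and traces: "\<And>w. w \<in> B \<Longrightarrow> connected_on (bar_component V H B w \<inter> B) T"
  shows "connected_on B T"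
  unfolding connected_on_def
proof (intro conjI ballI)
  let ?c = "bar_component V H B"
  show "B \<noteq> {}" by fact
  fix u v assume "u \<in> B" "v \<in> B"
  have "E \<subseteq> Delta V H B" "connected_on (A_comps V H B) ((`) ?c ` E)"
    using assms(1) unfolding admissible_def is_tree_def Gamma_edge_eq by blast+
  moreover have "?c u \<in> A_comps V H B" "?c v \<in> A_comps V H B"
    using \<open>u \<in> B\<close> \<open>v \<in> B\<close> unfolding A_comps_def by blast+
  ultimately have "reach ((`) ?c ` E) (?c u) (?c v)"
    using connected_on_reach[of "A_comps V H B" "(`) ?c ` E" "?c u" "?c v"] by blast
  then show "reach {e \<in> T. e \<subseteq> B} u v"
  proof (rule reach_lift[where S = B, OF _ \<open>u \<in> B\<close> \<open>v \<in> B\<close>])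
    fix e assume "e \<in> E"
    then obtain a b where "e = {a, b}" "a \<in> B" "b \<in> B"
      using \<open>E \<subseteq> Delta V H B\<close> by (blast elim: DeltaE)
    moreover have "e \<in> T" using \<open>e \<in> E\<close> assms(2) by blast
    ultimately show "\<exists>a b. e = {a, b} \<and> a \<in> B \<and> b \<in> B \<and> reach {e \<in> T. e \<subseteq> B} a b"
      by (auto intro: reach_edge)
  next
    fix w w' assume w: "w \<in> B" "w' \<in> B" "?c w = ?c w'"
    then have "w \<in> ?c w \<inter> B" "w' \<in> ?c w \<inter> B"
      using mem_component_self assms(3) by (metis IntI subsetD)+
    then show "reach {e \<in> T. e \<subseteq> B} w w'"
      by (rule connected_on_reach[OF traces[OF w(1)]]) blast
  qed
qed

lemma Comp_connected_if_admissible: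
  assumes "hypertree V H"
    and admissible: "\<And>B. basic_set V H B \<Longrightarrow> admissible V H B (E B)"
    and subset: "\<And>B. basic_set V H B \<Longrightarrow> E B \<subseteq> T"
    and "C \<in> Comp V H"
  shows "connected_on C T"
  using assms(4)
proof (induction "card C" arbitrary: C rule: less_induct)
  case less
  have hg: "hypergraph V H" using assms(1) unfolding hypertree_def by blast
  have "V \<noteq> {}" using assms(1) is_tree_nonempty unfolding hypertree_def host_tree_def by blast
  have C: "C \<subseteq> V" "C \<noteq> {}" "finite C"
    using Comp_subset[OF hg less.prems] Comp_nonempty[OF hg \<open>V \<noteq> {}\<close> less.prems]
      Comp_finite[OF hg less.prems] by blast+
  have smaller: "connected_on C' T" if "C' \<in> Comp V H" "C' \<subset> C" for C'
    using less.hyps[OF psubset_card_mono[OF C(3) that(2)] that(1)] .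
  consider "card C \<le> 1" | "basic_set V H C" | "1 < card C" "\<not> basic_set V H C" by linarith
  then show ?case
  proof cases
    case 1
    then obtain v where "C = {v}" using C(2,3) card_le_Suc0_iff_eq by fastforce
    then show ?thesis by (simp add: connected_on_singleton)
  next
    case 2
    show ?thesis
    proof (rule basic_set_connected_if_traces_connected[OF admissible[OF 2] subset[OF 2] C(1,2)])
      fix w assume "w \<in> C"
      have "\<not> C \<subseteq> bar_component V H C w"
        by (rule basic_set_not_within_bar_component[OF assms(1) 2 \<open>w \<in> C\<close>])
      then have "bar_component V H C w \<inter> C \<in> Comp V H" "bar_component V H C w \<inter> C \<subset> C"
        using bar_component_Int_in_Comp[OF hg less.prems \<open>w \<in> C\<close>] by blast+
      then show "connected_on (bar_component V H C w \<inter> C) T" by (rule smaller)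
    qed
  next
    case 3
    then obtain F where F: "F \<subseteq> {C' \<in> Comp V H. C' \<subset> C}" "connected_family F" "\<Union>F = C"
      using less.prems unfolding basic_set_def by blast
    have "connected_on (\<Union>F) T"
      by (rule connected_on_Union[OF F(2)]) (use F(1) smaller in blast)
    then show ?thesis using F(3) by simp
  qed
qed

theorem mainTheorem16:
  fixes V :: "'a set" and H :: "'a set set" and T :: "'a set set"
  assumes "hypertree V H"
    and "is_tree V T"
  shows "host_tree V H T \<longleftrightarrow>
    (\<exists>E :: 'a set \<Rightarrow> 'a set set.
        (\<forall>B. basic_set V H B \<longrightarrow> admissible V H B (E B)) \<and>
        T = (\<Union>B \<in> {B. basic_set V H B}. E B))"
proof -
  have hg: "hypergraph V H" using assms(1) unfolding hypertree_def by blast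
  show ?thesis
  proof
    assume host: "host_tree V H T"
    have "admissible V H B (T \<inter> Delta V H B)" if "basic_set V H B" for B
      using admissible_Int_Delta[OF hg host] that unfolding basic_set_def by blast
    then show "\<exists>E. (\<forall>B. basic_set V H B \<longrightarrow> admissible V H B (E B)) \<and>
        T = (\<Union>B \<in> {B. basic_set V H B}. E B)"
      using host_tree_eq_Union_Int_Delta[OF hg host]
      by (auto intro!: exI[of _ "\<lambda>B. T \<inter> Delta V H B"])
  next
    assume "\<exists>E. (\<forall>B. basic_set V H B \<longrightarrow> admissible V H B (E B)) \<and>
        T = (\<Union>B \<in> {B. basic_set V H B}. E B)"
    then obtain E where "\<And>B. basic_set V H B \<Longrightarrow> admissible V H B (E B)"
      and "\<And>B. basic_set V H B \<Longrightarrow> E B \<subseteq> T" by blast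
    then have "connected_on e T" if "e \<in> H" for e
      using Comp_connected_if_admissible[OF assms(1)] edge_in_Comp[OF hg that] by blast
    then show "host_tree V H T" using assms(2) unfolding host_tree_def by blast
  qed
qed

end
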